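(* Let $0<\alpha<2$, $\sigma>0$, and let $X=(X_i)_{1\le i\le n}$ be i.i.d. symmetric $\alpha$-stable random variables with distribution $\mathrm{Stab}_\alpha(0,\sigma)$. Let $A$ be an $n\times n$ (real symmetric) positive definite matrix. Then $$\langle X,AX\rangle\stackrel{d}{=}\|A^{1/2}G\|_\alpha^2\,S,$$ where $G$ is a standard Gaussian vector $N(0,I_n)$ independent of $S$, a positive $\alpha/2$-stable random variable with distribution $\mathrm{Stab}_{\frac\alpha2}(1,2\sigma^2v_{\frac\alpha2}^{-\frac2\alpha})$.
   Context: For $\sigma>0$, $0<a<2$, $\mathrm{Stab}_a(0,\sigma)$ is the law of a real random variable $Y$ with $\mathbb{E}\exp(itY)=\exp(-\sigma^a|t|^a)$ for all $t\in\mathbb{R}$. For $0<a<1$, $\mathrm{Stab}_a(1,\sigma)$ is the law supported on $\mathbb{R}_+$ with Laplace transform $\mathbb{E}\exp(-tY)=\exp(-\sigma^at^av_a)$ for $t\ge0$, where $v_a=\frac2\pi\sin(\frac{\pi a}2)\Gamma(1-a)\Gamma(a)$. For $x\in\mathbb{R}^n$, $\|x\|_\alpha=(\sum_i|x_i|^\alpha)^{1/\alpha}$; $\stackrel{d}{=}$ is equality in distribution. *)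

theory Defs
  imports "HOL-Probability.Probability"
begin

definition is_stab_sym :: "real \<Rightarrow> real \<Rightarrow> real measure \<Rightarrow> bool" where
  "is_stab_sym a \<sigma> \<mu> \<longleftrightarrow> real_distribution \<mu> \<and>
     (\<forall>t::real. char \<mu> t = complex_of_real (exp (- (\<sigma> powr a) * (\<bar>t\<bar> powr a))))"

definition v_const :: "real \<Rightarrow> real" where
  "v_const a = 2 / pi * sin (pi * a / 2) * Gamma (1 - a) * Gamma a"

definition is_stab_pos :: "real \<Rightarrow> real \<Rightarrow> real measure \<Rightarrow> bool" where
  "is_stab_pos a \<sigma> \<mu> \<longleftrightarrow> real_distribution \<mu> \<and> measure \<mu> {..<0} = 0 \<and>
     (\<forall>t::real\<ge>0. (LINT x|\<mu>. exp (- t * x)) = exp (- (\<sigma> powr a) * (t powr a) * v_const a))"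

definition lpnorm :: "real \<Rightarrow> real^'n \<Rightarrow> real" where
  "lpnorm p x = (\<Sum>i\<in>UNIV. \<bar>x $ i\<bar> powr p) powr (1 / p)"

definition sym_matrix :: "real^'n^'n \<Rightarrow> bool" where
  "sym_matrix A \<longleftrightarrow> transpose A = A"

definition pos_def_matrix :: "real^'n^'n \<Rightarrow> bool" where
  "pos_def_matrix A \<longleftrightarrow> sym_matrix A \<and> (\<forall>x. x \<noteq> 0 \<longrightarrow> x \<bullet> (A *v x) > 0)"

definition pos_semidef_matrix :: "real^'n^'n \<Rightarrow> bool" where
  "pos_semidef_matrix A \<longleftrightarrow> sym_matrix A \<and> (\<forall>x. x \<bullet> (A *v x) \<ge> 0)"

text \<open>The (unique) symmetric positive semidefinite square root A^(1/2).\<close>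
definition matrix_sqrt :: "real^'n^'n \<Rightarrow> real^'n^'n" where
  "matrix_sqrt A = (THE B. pos_semidef_matrix B \<and> B ** B = A)"

end

theory Submission
  imports Defs
begin

text \<open>Both sides are nonnegative, so it suffices to compare their Laplace transforms
  E exp (- s \<cdot>), s \<ge> 0. With B = A^(1/2) the left side is E exp (- s |B X|^2). Writing
  exp (- s |y|^2) = E exp (i sqrt (2 s) \<langle>y, G\<rangle>) for an independent Gaussian G and
  integrating X out first (Fubini, using the characteristic function of X and the symmetry of B)
  gives E exp (- (\<sigma> sqrt (2 s) ||B G||_\<alpha>)^\<alpha>). Integrating out the positive stable S on the right,
  independently of G, gives the same expression. Laplace transforms at the integers determine a
  law on [0,\<infinity>). The square root A^(1/2) is constructed from an orthonormal eigenbasis, obtained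
  by repeatedly maximising the Rayleigh quotient.\<close>

lemma (in prob_space) integral_iexp_weighted_sum_indep:
  fixes Z :: "'i::finite \<Rightarrow> 'a \<Rightarrow> real"
  assumes "indep_vars (\<lambda>_. borel) Z UNIV"
  shows "(CLINT \<omega>|M. iexp (t * (\<Sum>i\<in>UNIV. u i * Z i \<omega>)))
       = (\<Prod>i\<in>UNIV. char (distr M borel (Z i)) (t * u i))"
proof -
  have [measurable]: "Z i \<in> borel_measurable M" for i
    using assms unfolding indep_vars_def by auto
  have "indep_vars (\<lambda>_. borel) (\<lambda>i \<omega>. u i * Z i \<omega>) UNIV"
    by (rule indep_vars_compose2[OF assms]) auto
  then have "char (distr M borel (\<lambda>\<omega>. \<Sum>i\<in>UNIV. u i * Z i \<omega>)) t
           = (\<Prod>i\<in>UNIV. char (distr M borel (\<lambda>\<omega>. u i * Z i \<omega>)) t)"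
    by (rule char_distr_sum)
  then show ?thesis
    by (simp add: char_def integral_distr mult.assoc)
qed

lemma (in prob_space) integral_iexp_inner_std_normal:
  fixes G :: "'a \<Rightarrow> real^'n"
  assumes "indep_vars (\<lambda>_. borel) (\<lambda>i \<omega>. G \<omega> $ i) UNIV"
    and "\<And>i. distributed M lborel (\<lambda>\<omega>. G \<omega> $ i) std_normal_density"
  shows "(CLINT \<omega>|M. iexp (t * (y \<bullet> G \<omega>))) = exp (- (t\<^sup>2 * (y \<bullet> y)) / 2)"
proof -
  have "char (distr M borel (\<lambda>\<omega>. G \<omega> $ i)) s = exp (- s\<^sup>2 / 2)" for i s
  proof -
    have "distr M borel (\<lambda>\<omega>. G \<omega> $ i) = distr M lborel (\<lambda>\<omega>. G \<omega> $ i)"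
      by (rule distr_cong) auto
    then show ?thesis
      using assms(2)[of i] by (simp add: distributed_def char_std_normal_distribution)
  qed
  then have "(CLINT \<omega>|M. iexp (t * (y \<bullet> G \<omega>))) = (\<Prod>i\<in>UNIV. exp (- (t * y $ i)\<^sup>2 / 2))"
    using integral_iexp_weighted_sum_indep[OF assms(1), of t "\<lambda>i. y $ i"]
    by (simp add: inner_vec_def)
  also have "\<dots> = exp (- (t\<^sup>2 * (y \<bullet> y)) / 2)"
    by (simp add: exp_sum[symmetric] of_real_prod[symmetric] inner_vec_def sum_divide_distrib
        sum_distrib_left power_mult_distrib sum_negf power2_eq_square algebra_simps)
  finally show ?thesis .
qed

lemma lpnorm_powr:
  assumes "p \<noteq> 0"
  shows "lpnorm p x powr p = (\<Sum>i\<in>UNIV. \<bar>x $ i\<bar> powr p)"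
  using assms by (simp add: lpnorm_def powr_powr sum_nonneg)

lemma (in prob_space) integral_iexp_inner_stab_sym:
  fixes X :: "'a \<Rightarrow> real^'n"
  assumes "indep_vars (\<lambda>_. borel) (\<lambda>i \<omega>. X \<omega> $ i) UNIV"
    and "\<And>i. is_stab_sym \<alpha> \<sigma> (distr M borel (\<lambda>\<omega>. X \<omega> $ i))"
    and "0 < \<alpha>" "0 \<le> \<sigma>"
  shows "(CLINT \<omega>|M. iexp (t * (u \<bullet> X \<omega>))) = exp (- ((\<sigma> * \<bar>t\<bar> * lpnorm \<alpha> u) powr \<alpha>))"
proof -
  have "(CLINT \<omega>|M. iexp (t * (u \<bullet> X \<omega>)))
      = (\<Prod>i\<in>UNIV. exp (- (\<sigma> powr \<alpha>) * (\<bar>t * u $ i\<bar> powr \<alpha>)))"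
    using integral_iexp_weighted_sum_indep[OF assms(1), of t "\<lambda>i. u $ i"] assms(2)
    by (simp add: inner_vec_def is_stab_sym_def)
  also have "\<dots> = exp (- (\<sigma> powr \<alpha>) * (\<bar>t\<bar> powr \<alpha>) * (\<Sum>i\<in>UNIV. \<bar>u $ i\<bar> powr \<alpha>))"
    by (simp add: exp_sum[symmetric] of_real_prod[symmetric] abs_mult powr_mult sum_distrib_left
        algebra_simps)
  also have "\<dots> = exp (- ((\<sigma> * \<bar>t\<bar> * lpnorm \<alpha> u) powr \<alpha>))"
    using assms(3,4) lpnorm_powr[of \<alpha> u] by (simp add: powr_mult lpnorm_def)
  finally show ?thesis .
qed

lemma (in prob_space) abs_integral_diff_le_AE:
  fixes f g :: "'a \<Rightarrow> real"
  assumes "integrable M f" "integrable M g" "AE x in M. \<bar>f x - g x\<bar> \<le> e"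
  shows "\<bar>integral\<^sup>L M f - integral\<^sup>L M g\<bar> \<le> e"
proof -
  have "\<bar>integral\<^sup>L M f - integral\<^sup>L M g\<bar> = \<bar>LINT x|M. f x - g x\<bar>"
    using assms by simp
  also have "\<dots> \<le> LINT x|M. \<bar>f x - g x\<bar>"
    by (rule integral_abs_bound)
  also have "\<dots> \<le> LINT x|M. e"
    by (rule integral_mono_AE) (use assms in auto)
  finally show ?thesis
    by (simp add: prob_space)
qed

text \<open>Approximate f uniformly on [0,1] by polynomials (Stone--Weierstrass).\<close>
lemma integral_eq_of_moments_eq_unit_interval:
  fixes \<mu> \<nu> :: "real measure" and f :: "real \<Rightarrow> real"
  assumes "real_distribution \<mu>" "real_distribution \<nu>"
    and supp_\<mu>: "AE y in \<mu>. y \<in> {0..1}" and supp_\<nu>: "AE y in \<nu>. y \<in> {0..1}"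
    and moments: "\<And>k::nat. (LINT y|\<mu>. y ^ k) = (LINT y|\<nu>. y ^ k)"
    and f: "continuous_on UNIV f" "\<And>x. \<bar>f x\<bar> \<le> K"
  shows "(LINT y|\<mu>. f y) = (LINT y|\<nu>. f y)"
proof -
  interpret \<mu>: real_distribution \<mu> by fact
  interpret \<nu>: real_distribution \<nu> by fact
  have [measurable]: "f \<in> borel_measurable borel"
    using f(1) by (rule borel_measurable_continuous_onI)
  have int_f: "integrable \<mu> f" "integrable \<nu> f"
    by (auto intro!: \<mu>.integrable_const_bound[where B=K] \<nu>.integrable_const_bound[where B=K]
        simp: f(2))
  have int_pow: "integrable \<mu> (\<lambda>y. y ^ k)" "integrable \<nu> (\<lambda>y. y ^ k)" for k
    by (auto intro!: \<mu>.integrable_const_bound[where B=1] \<nu>.integrable_const_bound[where B=1]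
        intro: eventually_mono[OF supp_\<mu>] eventually_mono[OF supp_\<nu>] simp: power_le_one)
  have "\<bar>(LINT y|\<mu>. f y) - (LINT y|\<nu>. f y)\<bar> \<le> 0 + e" if "0 < e" for e
  proof -
    obtain g where "real_polynomial_function g" and g: "\<And>x. x \<in> {0..1} \<Longrightarrow> \<bar>f x - g x\<bar> < e / 2"
      using Stone_Weierstrass_real_polynomial_function[of "{0..1::real}" f "e / 2"] f(1) \<open>0 < e\<close>
      by (auto intro: continuous_on_subset)
    then obtain a n where g_def: "g = (\<lambda>x. \<Sum>i\<le>n. a i * x ^ i)"
      using real_polynomial_function_imp_sum by blast
    have int_g: "integrable \<mu> g" "integrable \<nu> g"
      unfolding g_def using int_pow by auto
    have "(LINT y|\<mu>. g y) = (LINT y|\<nu>. g y)"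
      unfolding g_def using int_pow moments by simp
    moreover have "\<bar>(LINT y|\<mu>. f y) - (LINT y|\<mu>. g y)\<bar> \<le> e / 2"
      by (rule \<mu>.abs_integral_diff_le_AE[OF int_f(1) int_g(1)])
        (use supp_\<mu> g in \<open>auto intro: less_imp_le elim: eventually_mono\<close>)
    moreover have "\<bar>(LINT y|\<nu>. f y) - (LINT y|\<nu>. g y)\<bar> \<le> e / 2"
      by (rule \<nu>.abs_integral_diff_le_AE[OF int_f(2) int_g(2)])
        (use supp_\<nu> g in \<open>auto intro: less_imp_le elim: eventually_mono\<close>)
    ultimately show ?thesis
      by linarith
  qed
  then have "\<bar>(LINT y|\<mu>. f y) - (LINT y|\<nu>. f y)\<bar> \<le> 0"
    by (rule field_le_epsilon)
  then show ?thesis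
    by simp
qed

lemma (in real_distribution) char_eq_integral_cos_sin:
  "char M t = (LINT x|M. cos (t * x)) + \<i> * (LINT x|M. sin (t * x))"
proof -
  have iexp: "iexp s = complex_of_real (cos s) + \<i> * complex_of_real (sin s)" for s
    by (simp add: cis_conv_exp[symmetric] complex_eq_iff)
  have "integrable M (\<lambda>x. cos (t * x))" "integrable M (\<lambda>x. sin (t * x))"
    by (auto intro!: integrable_const_bound[where B=1])
  then show ?thesis
    unfolding char_def iexp by (simp add: integrable_mult_right del: of_real_mult)
qed

text \<open>Under x \<mapsto> exp (- x) the Laplace transform at k becomes the k-th moment of a law on
  [0,1], and Levy's uniqueness theorem applies to the characteristic function.\<close>
lemma real_distribution_eq_of_laplace_nat_eq:
  fixes \<mu> \<nu> :: "real measure"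
  assumes "real_distribution \<mu>" "real_distribution \<nu>"
    and "AE x in \<mu>. 0 \<le> x" "AE x in \<nu>. 0 \<le> x"
    and laplace: "\<And>k::nat. (LINT x|\<mu>. exp (- real k * x)) = (LINT x|\<nu>. exp (- real k * x))"
  shows "\<mu> = \<nu>"
proof -
  interpret \<mu>: real_distribution \<mu> by fact
  interpret \<nu>: real_distribution \<nu> by fact
  let ?\<mu>' = "distr \<mu> borel (\<lambda>x. exp (- x))" and ?\<nu>' = "distr \<nu> borel (\<lambda>x. exp (- x))"
  have rd: "real_distribution ?\<mu>'" "real_distribution ?\<nu>'"
    by auto
  have supp: "AE y in ?\<mu>'. y \<in> {0..1}" "AE y in ?\<nu>'. y \<in> {0..1}"
    using assms(3,4) by (auto simp: AE_distr_iff elim!: eventually_mono)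
  have moments: "(LINT y|?\<mu>'. y ^ k) = (LINT y|?\<nu>'. y ^ k)" for k :: nat
    using laplace[of k] by (simp add: integral_distr exp_of_nat_mult[symmetric])
  have "(LINT y|?\<mu>'. cos (t * y)) = (LINT y|?\<nu>'. cos (t * y))"
    and "(LINT y|?\<mu>'. sin (t * y)) = (LINT y|?\<nu>'. sin (t * y))" for t
    by (rule integral_eq_of_moments_eq_unit_interval[OF rd supp moments, where K=1];
        auto intro!: continuous_intros)+
  then have "char ?\<mu>' = char ?\<nu>'"
    by (simp add: fun_eq_iff real_distribution.char_eq_integral_cos_sin[OF rd(1)]
        real_distribution.char_eq_integral_cos_sin[OF rd(2)])
  then have "?\<mu>' = ?\<nu>'"
    by (rule Levy_uniqueness[OF rd])
  then have "distr ?\<mu>' borel (\<lambda>y. - ln y) = distr ?\<nu>' borel (\<lambda>y. - ln y)"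
    by simp
  then show ?thesis
    by (simp add: distr_distr comp_def distr_id2)
qed

lemma distr_eq_of_laplace_nat_eq:
  fixes Q :: "'a \<Rightarrow> real" and R :: "'b \<Rightarrow> real"
  assumes "prob_space M" "prob_space N"
    and [measurable]: "Q \<in> borel_measurable M" "R \<in> borel_measurable N"
    and Q_nonneg: "AE \<omega> in M. 0 \<le> Q \<omega>" and R_nonneg: "AE \<eta> in N. 0 \<le> R \<eta>"
    and laplace: "\<And>k::nat. (LINT \<omega>|M. exp (- real k * Q \<omega>)) = (LINT \<eta>|N. exp (- real k * R \<eta>))"
  shows "distr M borel Q = distr N borel R"
proof (rule real_distribution_eq_of_laplace_nat_eq)
  show "real_distribution (distr M borel Q)" "real_distribution (distr N borel R)"
    using assms(1,2) by (simp_all add: prob_space.real_distribution_distr)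
  show "AE x in distr M borel Q. 0 \<le> x" "AE x in distr N borel R. 0 \<le> x"
    using Q_nonneg R_nonneg by (simp_all add: AE_distr_iff)
  show "(LINT x|distr M borel Q. exp (- real k * x)) = (LINT x|distr N borel R. exp (- real k * x))"
    for k :: nat
    using laplace[of k] by (simp add: integral_distr)
qed

lemma transpose_eq_self_iff_inner:
  fixes B :: "real^'n^'n"
  shows "transpose B = B \<longleftrightarrow> (\<forall>x y. (B *v x) \<bullet> y = x \<bullet> (B *v y))"
proof
  assume "transpose B = B"
  then have "B *v x = x v* B" for x
    by (metis transpose_matrix_vector)
  then show "\<forall>x y. (B *v x) \<bullet> y = x \<bullet> (B *v y)"
    by (simp add: dot_lmul_matrix)
next
  assume sym: "\<forall>x y. (B *v x) \<bullet> y = x \<bullet> (B *v y)"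
  have col: "(B *v axis j 1) $ i = B $ i $ j" for i j
    by (simp add: matrix_vector_mult_def axis_def if_distrib cong: if_cong)
  have "B $ j $ i = B $ i $ j" for i j
    using sym[rule_format, of "axis i 1" "axis j 1"] by (simp add: inner_axis inner_axis' col)
  then show "transpose B = B"
    by (simp add: vec_eq_iff transpose_def)
qed

lemma quadratic_form_eq_inner_square_root:
  fixes A B :: "real^'n^'n"
  assumes "transpose B = B" "B ** B = A"
  shows "x \<bullet> (A *v x) = (B *v x) \<bullet> (B *v x)"
  unfolding assms(2)[symmetric] using assms(1)
  by (simp add: transpose_eq_self_iff_inner matrix_vector_mul_assoc[symmetric])

lemma nonneg_eq_zero_of_linear_le_quadratic:
  fixes c D :: real
  assumes le: "\<And>t. 2 * t * c \<le> t\<^sup>2 * D" and "0 \<le> c"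
  shows "c = 0"
proof (rule ccontr)
  assume "c \<noteq> 0"
  with \<open>0 \<le> c\<close> have "0 < c" by simp
  define t where "t = c / (\<bar>D\<bar> + 1)"
  have "0 < t"
    unfolding t_def using \<open>0 < c\<close> by (simp add: add_pos_nonneg)
  with le[of t] have "2 * c \<le> t * D"
    by (simp add: power2_eq_square mult_le_cancel_left_pos mult.assoc mult.left_commute)
  also have "\<dots> \<le> t * \<bar>D\<bar>"
    using \<open>0 < t\<close> by (simp add: mult_left_mono)
  also have "\<dots> < c"
    unfolding t_def using \<open>0 < c\<close> by (simp add: field_simps)
  finally show False
    using \<open>0 < c\<close> by simp
qed

lemma quadratic_form_attains_max_on_subspace:
  fixes A :: "real^'n^'n"
  assumes "subspace W" "x0 \<in> W" "x0 \<noteq> 0"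
  obtains u where "u \<in> W" "u \<bullet> u = 1" "\<And>x. x \<in> W \<Longrightarrow> x \<bullet> (A *v x) \<le> (u \<bullet> (A *v u)) * (x \<bullet> x)"
proof -
  let ?f = "\<lambda>x. x \<bullet> (A *v x)"
  let ?K = "sphere 0 1 \<inter> W"
  have "compact ?K"
    by (intro compact_Int_closed compact_sphere closed_subspace assms(1))
  moreover have "x0 /\<^sub>R norm x0 \<in> ?K"
    using assms by (simp add: subspace_scale)
  ultimately obtain u where u: "u \<in> ?K" and max: "\<And>y. y \<in> ?K \<Longrightarrow> ?f y \<le> ?f u"
    using continuous_attains_sup[of ?K ?f] by (fastforce intro: continuous_intros)
  have "?f x \<le> ?f u * (x \<bullet> x)" if "x \<in> W" for x
  proof (cases "x = 0")
    case False
    have "x /\<^sub>R norm x \<in> ?K"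
      using that False assms(1) by (simp add: subspace_scale)
    then have "?f (x /\<^sub>R norm x) \<le> ?f u"
      by (rule max)
    moreover have "?f (x /\<^sub>R norm x) = ?f x / (x \<bullet> x)"
      by (simp add: matrix_vector_mult_scaleR power2_norm_eq_inner[symmetric] power2_eq_square
          field_simps)
    ultimately show ?thesis
      using False by (simp add: divide_le_eq)
  qed simp
  moreover have "u \<bullet> u = 1"
    using u by (simp add: norm_eq_sqrt_inner)
  ultimately show thesis
    using that u by blast
qed

text \<open>At a maximum u of the Rayleigh quotient on an A-invariant subspace, the residual
  y = A u - \<lambda> u is orthogonal to u, and comparing with u + t y for small t forces y = 0.\<close>
lemma rayleigh_maximizer_is_eigenvector:
  fixes A :: "real^'n^'n"
  assumes sym: "transpose A = A" and W: "subspace W"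
    and u: "u \<in> W" "u \<bullet> u = 1" "A *v u \<in> W"
    and max: "\<And>x. x \<in> W \<Longrightarrow> x \<bullet> (A *v x) \<le> (u \<bullet> (A *v u)) * (x \<bullet> x)"
  shows "A *v u = (u \<bullet> (A *v u)) *\<^sub>R u"
proof -
  have A_inner: "(A *v x) \<bullet> y = x \<bullet> (A *v y)" for x y
    using sym by (simp add: transpose_eq_self_iff_inner)
  define l where "l = u \<bullet> (A *v u)"
  define y where "y = A *v u - l *\<^sub>R u"
  have "y \<in> W"
    unfolding y_def using W u by (simp add: subspace_diff subspace_scale)
  have "y \<bullet> u = 0"
    using u(2) by (simp add: y_def l_def inner_diff_left inner_commute[of "A *v u"])
  then have c0: "y \<bullet> (A *v u) = y \<bullet> y"
    by (simp add: y_def inner_diff_right)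
  then have c: "u \<bullet> (A *v y) = y \<bullet> y"
    by (metis A_inner inner_commute)
  have "2 * t * (y \<bullet> y) \<le> t\<^sup>2 * (l * (y \<bullet> y) - y \<bullet> (A *v y))" for t
  proof -
    have "u + t *\<^sub>R y \<in> W"
      using W u(1) \<open>y \<in> W\<close> by (simp add: subspace_add subspace_scale)
    from max[OF this] have "(u + t *\<^sub>R y) \<bullet> (A *v (u + t *\<^sub>R y)) \<le> l * (1 + t\<^sup>2 * (y \<bullet> y))"
      using u(2) \<open>y \<bullet> u = 0\<close>
      by (simp add: l_def inner_add_left inner_add_right inner_commute[of u y] power2_eq_square
          mult.assoc)
    then show ?thesis
      using c0 c by (simp add: matrix_vector_right_distrib matrix_vector_mult_scaleR inner_add_left
          inner_add_right A_inner[of y u] l_def power2_eq_square algebra_simps)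
  qed
  then have "y \<bullet> y = 0"
    by (rule nonneg_eq_zero_of_linear_le_quadratic) simp
  then show ?thesis
    by (simp add: y_def l_def)
qed

definition orthonormal_eigenvectors :: "real^'n^'n \<Rightarrow> (real^'n) set \<Rightarrow> bool" where
  "orthonormal_eigenvectors A V \<longleftrightarrow> finite V \<and> pairwise orthogonal V \<and>
     (\<forall>v\<in>V. norm v = 1 \<and> A *v v = (v \<bullet> (A *v v)) *\<^sub>R v)"

lemma orthonormal_eigenvectors_independent:
  "orthonormal_eigenvectors A V \<Longrightarrow> independent V"
  unfolding orthonormal_eigenvectors_def by (rule pairwise_orthogonal_independent) auto

lemma orthonormal_eigenvectors_extend:
  fixes A :: "real^'n^'n"
  assumes sym: "transpose A = A" and V: "orthonormal_eigenvectors A V"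
    and card: "card V < CARD('n)"
  obtains u where "u \<notin> V" "orthonormal_eigenvectors A (insert u V)"
proof -
  have A_inner: "(A *v x) \<bullet> y = x \<bullet> (A *v y)" for x y
    using sym by (simp add: transpose_eq_self_iff_inner)
  define W where "W = {x. \<forall>v\<in>V. orthogonal v x}"
  have W: "subspace W"
    unfolding W_def by (rule subspace_orthogonal_to_vectors)
  have "dim V < DIM(real^'n)"
    using card dim_eq_card_independent[OF orthonormal_eigenvectors_independent[OF V]] by simp
  then obtain x0 where "x0 \<noteq> 0" and x0: "\<And>y. y \<in> span V \<Longrightarrow> orthogonal x0 y"
    using orthogonal_to_subspace_exists by blast
  have "orthogonal v x0" if "v \<in> V" for v
    using x0[OF span_base[OF that]] by (simp add: orthogonal_commute)
  then have "x0 \<in> W"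
    unfolding W_def by blast
  then obtain u where u: "u \<in> W" "u \<bullet> u = 1"
    and max: "\<And>x. x \<in> W \<Longrightarrow> x \<bullet> (A *v x) \<le> (u \<bullet> (A *v u)) * (x \<bullet> x)"
    using quadratic_form_attains_max_on_subspace[OF W _ \<open>x0 \<noteq> 0\<close>] by blast
  have eigen: "A *v v = (v \<bullet> (A *v v)) *\<^sub>R v" if "v \<in> V" for v
    using V that unfolding orthonormal_eigenvectors_def by blast
  have "orthogonal v (A *v u)" if "v \<in> V" for v
  proof -
    have "v \<bullet> (A *v u) = (A *v v) \<bullet> u"
      by (simp add: A_inner)
    also have "\<dots> = (v \<bullet> (A *v v)) * (v \<bullet> u)"
      by (subst eigen[OF that]) (simp only: inner_scaleR_left)
    finally have "v \<bullet> (A *v u) = (v \<bullet> (A *v v)) * (v \<bullet> u)" .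
    with u(1) that show ?thesis
      unfolding W_def orthogonal_def by simp
  qed
  then have "A *v u = (u \<bullet> (A *v u)) *\<^sub>R u"
    using rayleigh_maximizer_is_eigenvector[OF sym W u] max unfolding W_def by blast
  moreover have "u \<notin> V"
    using u unfolding W_def orthogonal_def by auto
  moreover have "norm u = 1"
    using u(2) by (simp add: norm_eq_sqrt_inner)
  moreover have "pairwise orthogonal (insert u V)"
    using V u(1) unfolding orthonormal_eigenvectors_def W_def
    by (auto simp: pairwise_insert orthogonal_def inner_commute)
  ultimately have "orthonormal_eigenvectors A (insert u V)"
    using V unfolding orthonormal_eigenvectors_def by simp
  with \<open>u \<notin> V\<close> show thesis
    using that by blast
qed

lemma orthonormal_eigenbasis_exists:
  fixes A :: "real^'n^'n"
  assumes "transpose A = A"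
  obtains V where "orthonormal_eigenvectors A V" "span V = UNIV"
proof -
  have "\<exists>V. orthonormal_eigenvectors A V \<and> card V = k" if "k \<le> CARD('n)" for k
    using that
  proof (induction k)
    case 0
    show ?case
      by (rule exI[of _ "{}"]) (simp add: orthonormal_eigenvectors_def)
  next
    case (Suc k)
    then obtain V where V: "orthonormal_eigenvectors A V" "card V = k"
      by auto
    with Suc.prems obtain u where "u \<notin> V" "orthonormal_eigenvectors A (insert u V)"
      using orthonormal_eigenvectors_extend[OF assms V(1)] by auto
    with V show ?case
      by (intro exI[of _ "insert u V"]) (simp add: orthonormal_eigenvectors_def)
  qed
  then obtain V where V: "orthonormal_eigenvectors A V" "card V = DIM(real^'n)"
    by auto
  then have "span V = UNIV"
    by (metis orthonormal_eigenvectors_independent dim_eq_card_independent dim_eq_full)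
  with V show thesis
    using that by blast
qed

lemma matrix_eq_on_spanning_set:
  fixes B C :: "real^'n^'m"
  assumes "span V = UNIV" "\<And>v. v \<in> V \<Longrightarrow> B *v v = C *v v"
  shows "B = C"
  unfolding matrix_eq
  using linear_eq_on_span[OF matrix_vector_mul_linear matrix_vector_mul_linear] assms by blast

lemma orthonormal_inner:
  assumes "pairwise orthogonal V" "\<And>v. v \<in> V \<Longrightarrow> norm v = 1" "v \<in> V" "w \<in> V"
  shows "v \<bullet> w = (if v = w then 1 else 0)"
  using assms unfolding pairwise_def orthogonal_def by (auto simp: norm_eq_sqrt_inner)

lemma pos_def_matrix_eigenbasis:
  fixes A :: "real^'n^'n"
  assumes "pos_def_matrix A"
  obtains V where "orthonormal_eigenvectors A V" "span V = UNIV" "\<And>v. v \<in> V \<Longrightarrow> 0 < v \<bullet> (A *v v)"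
proof -
  have "transpose A = A" and pos: "\<And>x. x \<noteq> 0 \<Longrightarrow> 0 < x \<bullet> (A *v x)"
    using assms unfolding pos_def_matrix_def sym_matrix_def by auto
  then obtain V where V: "orthonormal_eigenvectors A V" "span V = UNIV"
    using orthonormal_eigenbasis_exists by blast
  moreover have "0 < v \<bullet> (A *v v)" if "v \<in> V" for v
  proof -
    have "norm v = 1"
      using V(1) that unfolding orthonormal_eigenvectors_def by blast
    then show ?thesis
      using pos[of v] by (metis norm_zero zero_neq_one)
  qed
  ultimately show thesis
    using that by blast
qed

definition spectral_matrix :: "(real^'n) set \<Rightarrow> (real^'n \<Rightarrow> real) \<Rightarrow> real^'n^'n" where
  "spectral_matrix V c = matrix (\<lambda>x. \<Sum>v\<in>V. (c v * (x \<bullet> v)) *\<^sub>R v)"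

lemma spectral_matrix_apply:
  "spectral_matrix V c *v x = (\<Sum>v\<in>V. (c v * (x \<bullet> v)) *\<^sub>R v)"
proof -
  have "linear (\<lambda>x. \<Sum>v\<in>V. (c v * (x \<bullet> v)) *\<^sub>R v)"
    by (rule linearI) (simp_all add: inner_add_left distrib_left scaleR_add_left
        sum.distrib scaleR_right.sum mult.left_commute)
  then show ?thesis
    unfolding spectral_matrix_def by (simp only: matrix_vector_mul(2))
qed

lemma spectral_matrix_eigenvector:
  assumes "finite V" "pairwise orthogonal V" "\<And>v. v \<in> V \<Longrightarrow> norm v = 1" "w \<in> V"
  shows "spectral_matrix V c *v w = c w *\<^sub>R w"
proof -
  have "spectral_matrix V c *v w = (\<Sum>v\<in>V. if v = w then c w *\<^sub>R w else 0)"
    unfolding spectral_matrix_apply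
    by (intro sum.cong refl) (auto simp: orthonormal_inner[OF assms(2,3) assms(4)])
  then show ?thesis
    using assms(1,4) by simp
qed

lemma pos_semidef_spectral_matrix:
  assumes "\<And>v. v \<in> V \<Longrightarrow> 0 \<le> c v"
  shows "pos_semidef_matrix (spectral_matrix V c)"
proof -
  let ?S = "spectral_matrix V c"
  have apply_inner: "(?S *v x) \<bullet> y = (\<Sum>v\<in>V. c v * (x \<bullet> v) * (v \<bullet> y))" for x y
    by (simp add: spectral_matrix_apply inner_sum_left mult.assoc)
  have "(?S *v x) \<bullet> y = x \<bullet> (?S *v y)" for x y
  proof -
    have "x \<bullet> (?S *v y) = (\<Sum>v\<in>V. c v * (y \<bullet> v) * (v \<bullet> x))"
      by (subst inner_commute) (rule apply_inner)
    also have "\<dots> = (?S *v x) \<bullet> y"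
      unfolding apply_inner by (intro sum.cong refl) (simp add: inner_commute)
    finally show ?thesis ..
  qed
  moreover have "0 \<le> x \<bullet> (?S *v x)" for x
  proof -
    have "x \<bullet> (?S *v x) = (\<Sum>v\<in>V. c v * (x \<bullet> v) * (v \<bullet> x))"
      by (subst inner_commute) (rule apply_inner)
    also have "\<dots> = (\<Sum>v\<in>V. c v * (x \<bullet> v)\<^sup>2)"
      by (simp add: inner_commute power2_eq_square mult.assoc)
    also have "\<dots> \<ge> 0"
      using assms by (intro sum_nonneg) simp
    finally show ?thesis .
  qed
  ultimately show ?thesis
    unfolding pos_semidef_matrix_def sym_matrix_def transpose_eq_self_iff_inner by blast
qed

lemma pos_semidef_sqrt_on_eigenvector:
  fixes A C :: "real^'n^'n"
  assumes C: "pos_semidef_matrix C" "C ** C = A" and v: "A *v v = l *\<^sub>R v" "0 < l"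
  shows "C *v v = sqrt l *\<^sub>R v"
proof -
  define y where "y = C *v v - sqrt l *\<^sub>R v"
  have "C *v y = C *v (C *v v) - sqrt l *\<^sub>R (C *v v)"
    by (simp add: y_def matrix_vector_mult_diff_distrib matrix_vector_mult_scaleR)
  also have "C *v (C *v v) = (sqrt l * sqrt l) *\<^sub>R v"
    using C(2) v by (simp add: matrix_vector_mul_assoc)
  finally have "C *v y = (- sqrt l) *\<^sub>R y"
    by (simp add: y_def algebra_simps)
  moreover have "0 \<le> y \<bullet> (C *v y)"
    using C(1) unfolding pos_semidef_matrix_def by blast
  ultimately have "y \<bullet> y \<le> 0"
    using v(2) by (simp add: mult_le_0_iff)
  then have "y = 0"
    by (metis inner_eq_zero_iff inner_ge_zero order_antisym)
  then show ?thesis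
    by (simp add: y_def)
qed

lemma pos_def_matrix_sqrt_exists:
  fixes A :: "real^'n^'n"
  assumes "pos_def_matrix A"
  obtains B where "pos_semidef_matrix B" "B ** B = A"
proof -
  obtain V where V: "orthonormal_eigenvectors A V" "span V = UNIV"
    and pos: "\<And>v. v \<in> V \<Longrightarrow> 0 < v \<bullet> (A *v v)"
    using pos_def_matrix_eigenbasis[OF assms] by blast
  define B where "B = spectral_matrix V (\<lambda>v. sqrt (v \<bullet> (A *v v)))"
  have "pos_semidef_matrix B"
    unfolding B_def using pos by (intro pos_semidef_spectral_matrix) (simp add: less_imp_le)
  moreover have "B ** B = A"
  proof (rule matrix_eq_on_spanning_set[OF V(2)])
    fix v
    assume v: "v \<in> V"
    define l where "l = v \<bullet> (A *v v)"
    have "finite V" "pairwise orthogonal V" "\<And>v. v \<in> V \<Longrightarrow> norm v = 1"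
      using V(1) unfolding orthonormal_eigenvectors_def by blast+
    then have B_v: "B *v v = sqrt l *\<^sub>R v"
      unfolding B_def l_def using v by (rule spectral_matrix_eigenvector)
    have "0 < l"
      unfolding l_def by (rule pos[OF v])
    have "(B ** B) *v v = (sqrt l * sqrt l) *\<^sub>R v"
      by (simp only: matrix_vector_mul_assoc[symmetric] B_v matrix_vector_mult_scaleR scaleR_scaleR)
    also have "\<dots> = l *\<^sub>R v"
      using \<open>0 < l\<close> by simp
    also have "\<dots> = A *v v"
      using V(1) v unfolding l_def orthonormal_eigenvectors_def by metis
    finally show "(B ** B) *v v = A *v v" .
  qed
  ultimately show thesis
    using that by blast
qed

lemma pos_def_matrix_sqrt_unique:
  fixes A B C :: "real^'n^'n"
  assumes "pos_def_matrix A" "pos_semidef_matrix B" "B ** B = A" "pos_semidef_matrix C" "C ** C = A"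
  shows "B = C"
proof -
  obtain V where V: "orthonormal_eigenvectors A V" "span V = UNIV"
    and pos: "\<And>v. v \<in> V \<Longrightarrow> 0 < v \<bullet> (A *v v)"
    using pos_def_matrix_eigenbasis[OF assms(1)] by blast
  show ?thesis
  proof (rule matrix_eq_on_spanning_set[OF V(2)])
    fix v
    assume "v \<in> V"
    then have eigen: "A *v v = (v \<bullet> (A *v v)) *\<^sub>R v" "0 < v \<bullet> (A *v v)"
      using V(1) pos unfolding orthonormal_eigenvectors_def by blast+
    show "B *v v = C *v v"
      by (simp add: pos_semidef_sqrt_on_eigenvector[OF assms(2,3) eigen]
          pos_semidef_sqrt_on_eigenvector[OF assms(4,5) eigen])
  qed
qed

lemma matrix_sqrt_of_pos_def:
  fixes A :: "real^'n^'n"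
  assumes "pos_def_matrix A"
  shows "pos_semidef_matrix (matrix_sqrt A)" "matrix_sqrt A ** matrix_sqrt A = A"
proof -
  have "\<exists>!B. pos_semidef_matrix B \<and> B ** B = A"
    using pos_def_matrix_sqrt_exists[OF assms] pos_def_matrix_sqrt_unique[OF assms] by blast
  then have "pos_semidef_matrix (matrix_sqrt A) \<and> matrix_sqrt A ** matrix_sqrt A = A"
    unfolding matrix_sqrt_def by (rule theI')
  then show "pos_semidef_matrix (matrix_sqrt A)" "matrix_sqrt A ** matrix_sqrt A = A"
    by blast+
qed

lemma borel_measurable_vec_of_nth:
  fixes X :: "'a \<Rightarrow> real^'n"
  assumes "\<And>i. (\<lambda>\<omega>. X \<omega> $ i) \<in> borel_measurable M"
  shows "X \<in> borel_measurable M"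
  using assms by (subst borel_measurable_euclidean_space) (auto simp: Basis_vec_def inner_axis)

lemma borel_measurable_matrix_vector_mult [measurable]:
  fixes B :: "real^'n^'m"
  shows "(*v) B \<in> borel_measurable borel"
  by (intro borel_measurable_continuous_onI matrix_vector_mult_linear_continuous_on)

lemma borel_measurable_lpnorm [measurable]: "lpnorm p \<in> borel_measurable borel"
proof -
  have "(\<lambda>x::real^'n. x $ i) \<in> borel_measurable borel" for i
    by (intro borel_measurable_continuous_onI continuous_intros)
  then show ?thesis
    unfolding lpnorm_def by measurable
qed

text \<open>Both sides equal the expectation of iexp (sqrt (2 s) \<langle>B X, G\<rangle>) over X and an
  independent Gaussian G, integrated first in G or first in X.\<close>
lemma integral_exp_inner_square_stab_sym:
  fixes X :: "'a \<Rightarrow> real^'n" and G :: "'b \<Rightarrow> real^'n" and B :: "real^'n^'n"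
  assumes M: "prob_space M" "prob_space.indep_vars M (\<lambda>_. borel) (\<lambda>i \<omega>. X \<omega> $ i) UNIV"
      "\<And>i. is_stab_sym \<alpha> \<sigma> (distr M borel (\<lambda>\<omega>. X \<omega> $ i))"
    and N: "prob_space N" "prob_space.indep_vars N (\<lambda>_. borel) (\<lambda>i \<omega>. G \<omega> $ i) UNIV"
      "\<And>i. distributed N lborel (\<lambda>\<omega>. G \<omega> $ i) std_normal_density"
    and "0 < \<alpha>" "0 \<le> \<sigma>" "transpose B = B" "0 \<le> s"
  shows "(LINT \<omega>|M. exp (- s * ((B *v X \<omega>) \<bullet> (B *v X \<omega>))))
       = (LINT \<eta>|N. exp (- ((\<sigma> * sqrt (2 * s) * lpnorm \<alpha> (B *v G \<eta>)) powr \<alpha>)))"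
proof -
  interpret M: prob_space M by fact
  interpret N: prob_space N by fact
  interpret MN: pair_prob_space M N ..
  have [measurable]: "X \<in> borel_measurable M"
    using M(2) unfolding M.indep_vars_def by (auto intro: borel_measurable_vec_of_nth)
  have [measurable]: "G \<in> borel_measurable N"
    using N(2) unfolding N.indep_vars_def by (auto intro: borel_measurable_vec_of_nth)
  define t where "t = sqrt (2 * s)"
  define F where "F \<omega> \<eta> = iexp (t * ((B *v X \<omega>) \<bullet> G \<eta>))" for \<omega> \<eta>
  have "(B *v x) \<bullet> y = (B *v y) \<bullet> x" for x y
    using \<open>transpose B = B\<close> by (simp add: transpose_eq_self_iff_inner inner_commute)
  then have F_swap: "F \<omega> \<eta> = iexp (t * ((B *v G \<eta>) \<bullet> X \<omega>))" for \<omega> \<eta>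
    unfolding F_def by simp
  have "(\<lambda>p. F (fst p) (snd p)) \<in> borel_measurable (M \<Otimes>\<^sub>M N)"
    unfolding F_def by measurable
  then have "integrable (M \<Otimes>\<^sub>M N) (case_prod F)"
    by (intro MN.P.integrable_const_bound[where B=1]) (auto simp: split_beta' F_def)
  then have "(CLINT \<omega>|M. CLINT \<eta>|N. F \<omega> \<eta>) = (CLINT \<eta>|N. CLINT \<omega>|M. F \<omega> \<eta>)"
    by (rule MN.Fubini_integral[symmetric])
  moreover have "(CLINT \<eta>|N. F \<omega> \<eta>) = exp (- s * ((B *v X \<omega>) \<bullet> (B *v X \<omega>)))" for \<omega>
    unfolding F_def N.integral_iexp_inner_std_normal[OF N(2,3)]
    using \<open>0 \<le> s\<close> by (simp add: t_def)
  moreover have "(CLINT \<omega>|M. F \<omega> \<eta>)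
      = exp (- ((\<sigma> * sqrt (2 * s) * lpnorm \<alpha> (B *v G \<eta>)) powr \<alpha>))" for \<eta>
    unfolding F_swap M.integral_iexp_inner_stab_sym[OF M(2,3) \<open>0 < \<alpha>\<close> \<open>0 \<le> \<sigma>\<close>]
    using \<open>0 \<le> s\<close> by (simp add: t_def)
  ultimately show ?thesis
    by simp
qed

lemma is_stab_pos_AE_nonneg:
  assumes "is_stab_pos a c \<mu>"
  shows "AE x in \<mu>. 0 \<le> x"
proof -
  interpret real_distribution \<mu>
    using assms unfolding is_stab_pos_def by blast
  have "{..<0::real} \<in> null_sets \<mu>"
    using assms by (simp add: is_stab_pos_def emeasure_eq_measure null_sets_def)
  then show ?thesis
    by (auto dest: AE_not_in elim: eventually_mono)
qed

lemma v_const_pos: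
  assumes "0 < a" "a < 1"
  shows "0 < v_const a"
proof -
  have "0 < sin (pi * a / 2)"
    using assms by (intro sin_gt_zero) (auto simp: field_simps)
  moreover have "0 < Gamma (1 - a)" "0 < Gamma a"
    using assms by (auto intro!: Gamma_real_pos)
  ultimately show ?thesis
    unfolding v_const_def by simp
qed

text \<open>The joint law of (G, S) is the product of the marginals, so S can be integrated out
  first.\<close>
lemma integral_exp_mult_indep_stab_pos:
  fixes G :: "'b \<Rightarrow> 'c::topological_space" and S :: "'b \<Rightarrow> real"
  assumes "prob_space N" and [measurable]: "G \<in> borel_measurable N" "S \<in> borel_measurable N"
    and indep: "\<And>U V. U \<in> sets borel \<Longrightarrow> V \<in> sets borel \<Longrightarrow>
           measure N {\<omega>\<in>space N. G \<omega> \<in> U \<and> S \<omega> \<in> V}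
             = measure N {\<omega>\<in>space N. G \<omega> \<in> U} * measure N {\<omega>\<in>space N. S \<omega> \<in> V}"
    and stab: "is_stab_pos a c (distr N borel S)"
    and [measurable]: "F \<in> borel_measurable borel" and F_nonneg: "\<And>g. 0 \<le> F g"
  shows "(LINT \<eta>|N. exp (- F (G \<eta>) * S \<eta>))
       = (LINT \<eta>|N. exp (- (c powr a) * (F (G \<eta>) powr a) * v_const a))"
proof -
  interpret N: prob_space N by fact
  define D where "D = distr N borel S"
  define GG where "GG = distr N borel G"
  have sets_D [measurable_cong]: "sets D = sets borel"
    unfolding D_def by simp
  interpret D: prob_space D
    unfolding D_def by (rule N.prob_space_distr) simp
  interpret GG: prob_space GG
    unfolding GG_def by (rule N.prob_space_distr) simp
  interpret GD: pair_prob_space GG D ..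
  have D_nonneg: "AE x in D. 0 \<le> x"
    using stab unfolding D_def by (rule is_stab_pos_AE_nonneg)
  \<comment> \<open>truncating at 0 makes h bounded; it agrees with exp (- F g * x) for x \<ge> 0, i.e. a.s.\<close>
  define h where "h p = exp (- F (fst p) * max (snd p) 0)" for p :: "'c \<times> real"
  have [measurable]: "h \<in> borel_measurable (borel \<Otimes>\<^sub>M borel)"
    unfolding h_def by measurable
  have joint: "GG \<Otimes>\<^sub>M D = distr N (borel \<Otimes>\<^sub>M borel) (\<lambda>\<eta>. (G \<eta>, S \<eta>))"
  proof (rule pair_measure_eqI)
    fix U V
    assume "U \<in> sets GG" "V \<in> sets D"
    then have "U \<in> sets borel" "V \<in> sets borel"
      unfolding GG_def D_def by auto
    then show "emeasure GG U * emeasure D V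
        = emeasure (distr N (borel \<Otimes>\<^sub>M borel) (\<lambda>\<eta>. (G \<eta>, S \<eta>))) (U \<times> V)"
      unfolding GG_def D_def
      by (simp add: emeasure_distr N.emeasure_eq_measure Int_def conj_commute indep ennreal_mult)
  qed (auto simp: GG_def D_def intro: prob_space_imp_sigma_finite
      GG.prob_space_axioms[unfolded GG_def] D.prob_space_axioms[unfolded D_def])
  have "integrable (GG \<Otimes>\<^sub>M D) h"
  proof (rule GD.P.integrable_const_bound[where B=1])
    have "(borel_measurable (GG \<Otimes>\<^sub>M D) :: (_ \<Rightarrow> real) set) = borel_measurable (borel \<Otimes>\<^sub>M borel)"
      by (rule measurable_cong_sets) (simp_all add: GG_def D_def)
    then show "h \<in> borel_measurable (GG \<Otimes>\<^sub>M D)"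
      by simp
  qed (auto simp: h_def F_nonneg)
  have inner: "(LINT x|D. h (g, x)) = exp (- (c powr a) * (F g powr a) * v_const a)" for g
  proof -
    have "(LINT x|D. h (g, x)) = (LINT x|D. exp (- F g * x))"
    proof (rule integral_cong_AE)
      show "AE x in D. h (g, x) = exp (- F g * x)"
        using D_nonneg by eventually_elim (simp add: h_def)
    qed simp_all
    also have "\<dots> = exp (- (c powr a) * (F g powr a) * v_const a)"
      using stab F_nonneg unfolding is_stab_pos_def D_def by blast
    finally show ?thesis .
  qed
  have "(LINT \<eta>|N. exp (- F (G \<eta>) * S \<eta>)) = (LINT \<eta>|N. h (G \<eta>, S \<eta>))"
    using D_nonneg unfolding D_def
    by (intro integral_cong_AE) (auto simp: AE_distr_iff h_def max_def elim: eventually_mono)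
  also have "\<dots> = integral\<^sup>L (GG \<Otimes>\<^sub>M D) h"
    by (simp add: joint integral_distr)
  also have "\<dots> = (LINT g|GG. LINT x|D. h (g, x))"
    by (rule GD.integral_fst'[symmetric]) fact
  also have "\<dots> = (LINT \<eta>|N. exp (- (c powr a) * (F (G \<eta>) powr a) * v_const a))"
    by (simp add: inner GG_def integral_distr)
  finally show ?thesis .
qed

lemma stab_pos_scale_powr:
  fixes \<alpha> \<sigma> v s L :: real
  assumes "0 < \<alpha>" "0 < \<sigma>" "0 < v" "0 \<le> s" "0 \<le> L"
  shows "(2 * \<sigma>\<^sup>2 * v powr (- 2 / \<alpha>)) powr (\<alpha> / 2) * ((s * L\<^sup>2) powr (\<alpha> / 2)) * v
       = (\<sigma> * sqrt (2 * s) * L) powr \<alpha>"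
proof -
  let ?x = "\<sigma> * sqrt (2 * s) * L"
  have "(v powr (- 2 / \<alpha>)) powr (\<alpha> / 2) = v powr (- 1)"
    using assms by (simp add: powr_powr)
  then have scale: "(2 * \<sigma>\<^sup>2 * v powr (- 2 / \<alpha>)) powr (\<alpha> / 2) = (2 * \<sigma>\<^sup>2) powr (\<alpha> / 2) * v powr (- 1)"
    by (simp only: powr_mult)
  have "(2 * \<sigma>\<^sup>2) powr (\<alpha> / 2) * (s * L\<^sup>2) powr (\<alpha> / 2) = (2 * \<sigma>\<^sup>2 * (s * L\<^sup>2)) powr (\<alpha> / 2)"
    by (rule powr_mult[symmetric])
  also have "2 * \<sigma>\<^sup>2 * (s * L\<^sup>2) = ?x\<^sup>2"
    using assms by (simp add: power_mult_distrib)
  also have "(?x\<^sup>2) powr (\<alpha> / 2) = (?x powr 2) powr (\<alpha> / 2)"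
    using assms by (simp add: powr_numeral)
  also have "\<dots> = ?x powr \<alpha>"
    by (simp add: powr_powr)
  finally have "(2 * \<sigma>\<^sup>2) powr (\<alpha> / 2) * (s * L\<^sup>2) powr (\<alpha> / 2) = ?x powr \<alpha>" .
  with \<open>0 < v\<close> show ?thesis
    unfolding scale by (simp add: powr_minus field_simps)
qed

lemma integral_exp_subordinated_lpnorm:
  fixes G :: "'b \<Rightarrow> real^'n" and S :: "'b \<Rightarrow> real" and B :: "real^'n^'n"
  assumes "0 < \<alpha>" "\<alpha> < 2" "0 < \<sigma>" "0 \<le> s"
    and "prob_space N" "G \<in> borel_measurable N" "S \<in> borel_measurable N"
    and "\<And>U V. U \<in> sets borel \<Longrightarrow> V \<in> sets borel \<Longrightarrow>
           measure N {\<omega>\<in>space N. G \<omega> \<in> U \<and> S \<omega> \<in> V}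
             = measure N {\<omega>\<in>space N. G \<omega> \<in> U} * measure N {\<omega>\<in>space N. S \<omega> \<in> V}"
    and "is_stab_pos (\<alpha> / 2) (2 * \<sigma>\<^sup>2 * v_const (\<alpha> / 2) powr (- 2 / \<alpha>)) (distr N borel S)"
  shows "(LINT \<eta>|N. exp (- s * ((lpnorm \<alpha> (B *v G \<eta>))\<^sup>2 * S \<eta>)))
       = (LINT \<eta>|N. exp (- ((\<sigma> * sqrt (2 * s) * lpnorm \<alpha> (B *v G \<eta>)) powr \<alpha>)))"
proof -
  let ?F = "\<lambda>g. s * (lpnorm \<alpha> (B *v g))\<^sup>2"
  have "0 < v_const (\<alpha> / 2)"
    using assms(1,2) by (intro v_const_pos) simp_all
  then have "(2 * \<sigma>\<^sup>2 * v_const (\<alpha> / 2) powr (- 2 / \<alpha>)) powr (\<alpha> / 2) * (?F g powr (\<alpha> / 2))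
      * v_const (\<alpha> / 2) = (\<sigma> * sqrt (2 * s) * lpnorm \<alpha> (B *v g)) powr \<alpha>" for g
    using assms(1,3,4) by (intro stab_pos_scale_powr) (simp_all add: lpnorm_def)
  moreover have "(LINT \<eta>|N. exp (- ?F (G \<eta>) * S \<eta>))
      = (LINT \<eta>|N. exp (- ((2 * \<sigma>\<^sup>2 * v_const (\<alpha> / 2) powr (- 2 / \<alpha>)) powr (\<alpha> / 2))
          * (?F (G \<eta>) powr (\<alpha> / 2)) * v_const (\<alpha> / 2)))"
    using assms(4) by (intro integral_exp_mult_indep_stab_pos[OF assms(5-9)]) simp_all
  ultimately show ?thesis
    by (simp add: mult.assoc)
qed

theorem lemmaB1:
  fixes \<alpha> \<sigma> :: real
    and M :: "'a measure" and X :: "'a \<Rightarrow> real^'n"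
    and N :: "'b measure" and G :: "'b \<Rightarrow> real^'n" and S :: "'b \<Rightarrow> real"
    and A :: "real^'n^'n"
  assumes "0 < \<alpha>" "\<alpha> < 2" "0 < \<sigma>"
    and "prob_space M"
    and "prob_space.indep_vars M (\<lambda>_. borel) (\<lambda>i \<omega>. X \<omega> $ i) UNIV"
    and "\<And>i. is_stab_sym \<alpha> \<sigma> (distr M borel (\<lambda>\<omega>. X \<omega> $ i))"
    and "pos_def_matrix A"
    and "prob_space N"
    and "prob_space.indep_vars N (\<lambda>_. borel) (\<lambda>i \<omega>. G \<omega> $ i) UNIV"
    and "\<And>i. distributed N lborel (\<lambda>\<omega>. G \<omega> $ i) std_normal_density"
    and "G \<in> borel_measurable N" and "S \<in> borel_measurable N"
    and "\<And>U V. U \<in> sets borel \<Longrightarrow> V \<in> sets borel \<Longrightarrow>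
           measure N {\<omega>\<in>space N. G \<omega> \<in> U \<and> S \<omega> \<in> V}
             = measure N {\<omega>\<in>space N. G \<omega> \<in> U} * measure N {\<omega>\<in>space N. S \<omega> \<in> V}"
    and "is_stab_pos (\<alpha> / 2) (2 * \<sigma>\<^sup>2 * v_const (\<alpha> / 2) powr (- 2 / \<alpha>)) (distr N borel S)"
  shows "distr M borel (\<lambda>\<omega>. X \<omega> \<bullet> (A *v X \<omega>))
       = distr N borel (\<lambda>\<omega>. (lpnorm \<alpha> (matrix_sqrt A *v G \<omega>))\<^sup>2 * S \<omega>)"
proof -
  interpret M: prob_space M by fact
  define B where "B = matrix_sqrt A"
  have B: "transpose B = B" "B ** B = A"
    using matrix_sqrt_of_pos_def[OF assms(7)] unfolding B_def pos_semidef_matrix_def sym_matrix_def by auto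
  have [measurable]: "X \<in> borel_measurable M" "G \<in> borel_measurable N" "S \<in> borel_measurable N"
    using assms(5,11,12) unfolding M.indep_vars_def by (auto intro: borel_measurable_vec_of_nth)
  have quad: "X \<omega> \<bullet> (A *v X \<omega>) = (B *v X \<omega>) \<bullet> (B *v X \<omega>)" for \<omega>
    by (rule quadratic_form_eq_inner_square_root[OF B])
  have "distr M borel (\<lambda>\<omega>. X \<omega> \<bullet> (A *v X \<omega>))
      = distr N borel (\<lambda>\<eta>. (lpnorm \<alpha> (B *v G \<eta>))\<^sup>2 * S \<eta>)"
  proof (rule distr_eq_of_laplace_nat_eq[OF assms(4,8)])
    show "(\<lambda>\<omega>. X \<omega> \<bullet> (A *v X \<omega>)) \<in> borel_measurable M"
      by measurable
    show "(\<lambda>\<eta>. (lpnorm \<alpha> (B *v G \<eta>))\<^sup>2 * S \<eta>) \<in> borel_measurable N"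
      by measurable
    show "AE \<omega> in M. 0 \<le> X \<omega> \<bullet> (A *v X \<omega>)"
      by (simp add: quad)
    show "AE \<eta> in N. 0 \<le> (lpnorm \<alpha> (B *v G \<eta>))\<^sup>2 * S \<eta>"
      using is_stab_pos_AE_nonneg[OF assms(14)] by (auto simp: AE_distr_iff elim: eventually_mono)
    fix k :: nat
    have "(LINT \<omega>|M. exp (- real k * (X \<omega> \<bullet> (A *v X \<omega>))))
        = (LINT \<omega>|M. exp (- real k * ((B *v X \<omega>) \<bullet> (B *v X \<omega>))))"
      by (simp only: quad)
    also have "\<dots> = (LINT \<eta>|N. exp (- ((\<sigma> * sqrt (2 * real k) * lpnorm \<alpha> (B *v G \<eta>)) powr \<alpha>)))"
      using assms(3) by (intro integral_exp_inner_square_stab_sym[OF assms(4-6,8-10,1) _ B(1)]) simp_all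
    also have "\<dots> = (LINT \<eta>|N. exp (- real k * ((lpnorm \<alpha> (B *v G \<eta>))\<^sup>2 * S \<eta>)))"
      by (intro integral_exp_subordinated_lpnorm[OF assms(1-3) _ assms(8,11-14), symmetric]) simp
    finally show "(LINT \<omega>|M. exp (- real k * (X \<omega> \<bullet> (A *v X \<omega>))))
        = (LINT \<eta>|N. exp (- real k * ((lpnorm \<alpha> (B *v G \<eta>))\<^sup>2 * S \<eta>)))" .
  qed
  then show ?thesis
    unfolding B_def .
qed

end
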